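(* Let $d\ge 1$ and let $(f_0, f_1, \ldots, f_{d-1})$ be a finite sequence of integers with $f_i > 0$ for all $i$. Put $f_{-1}=1$. The following conditions are equivalent: (i) there is a quasi-forest $\Delta$ of dimension $d-1$ with $f(\Delta) = (f_0, \ldots, f_{d-1})$; (ii) there is a forest $\Delta$ of dimension $d-1$ with $f(\Delta) = (f_0, \ldots, f_{d-1})$; (iii) the integers $c_0,\ldots,c_d$ defined by $\sum_{i=0}^{d} f_{i-1}(x-1)^{i} = \sum_{i=0}^{d} c_i x^i$ satisfy $\sum_{i=k}^{d} c_i > 0$ for each $1 \le k \le d$; (iv) the integers $b_1,\ldots,b_d$ defined by $\sum_{i=1}^{d} f_{i-1}(x-1)^{i-1} = \sum_{i=1}^{d} b_i x^{i-1}$ satisfy $b_i > 0$ for all $1 \le i \le d$.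
   Context: A simplicial complex $\Delta$ on $[n]=\{1,\ldots,n\}$ is a collection of subsets of $[n]$ such that $\{i\}\in\Delta$ for every $i\in[n]$ and $G\subset F\in\Delta$ implies $G\in\Delta$. If $d=\max\{|F|:F\in\Delta\}$, then $\dim\Delta=d-1$. Facets are maximal faces. The $f$-vector is $f(\Delta)=(f_0,\ldots,f_{d-1})$, where $f_i$ is the number of faces with $i+1$ elements. For facets $F_{i_1},\ldots,F_{i_q}$, $\langle F_{i_1},\ldots,F_{i_q}\rangle$ denotes the subcomplex consisting of all faces contained in some $F_{i_j}$. A facet $F$ of $\Delta$ is a leaf if there is a facet $G\neq F$ (a branch of $F$) with $H\cap F\subset G\cap F$ for all facets $H\neq F$. A quasi-forest is a simplicial complex whose facets admit an ordering $F_1,\ldots,F_s$ (a leaf order) such that for each $1<j\le s$, $F_j$ is a leaf of $\langle F_1,\ldots,F_j\rangle$. A forest is a simplicial complex such that for every nonempty subset $\{F_{i_1},\ldots,F_{i_q}\}$ of its facets, the subcomplex $\langle F_{i_1},\ldots,F_{i_q}\rangle$ has a leaf. (Here a complex with a single facet is regarded as a quasi-forest and forest, its single facet counting as a leaf.) *)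

theory Defs
  imports "HOL-Computational_Algebra.Polynomial"
begin

definition simplicial_complex :: "nat \<Rightarrow> nat set set \<Rightarrow> bool" where
  "simplicial_complex n \<Delta> \<longleftrightarrow>
     (\<forall>i\<in>{1..n}. {i} \<in> \<Delta>) \<and> (\<forall>F\<in>\<Delta>. F \<subseteq> {1..n}) \<and>
     (\<forall>F G. F \<in> \<Delta> \<longrightarrow> G \<subseteq> F \<longrightarrow> G \<in> \<Delta>)"

text \<open>Largest face size d; the dimension is d - 1.\<close>
definition face_size :: "nat set set \<Rightarrow> nat" where
  "face_size \<Delta> = Max (card ` \<Delta>)"

definition fnum :: "nat set set \<Rightarrow> nat \<Rightarrow> nat" where
  "fnum \<Delta> i = card {F \<in> \<Delta>. card F = i + 1}"

definition facets :: "nat set set \<Rightarrow> nat set set" where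
  "facets \<Delta> = {F \<in> \<Delta>. \<forall>G\<in>\<Delta>. F \<subseteq> G \<longrightarrow> G = F}"

definition gen :: "nat set set \<Rightarrow> nat set set" where
  "gen S = {G. \<exists>F\<in>S. G \<subseteq> F}"

text \<open>Leaf; a sole facet counts as a leaf.\<close>
definition is_leaf :: "nat set set \<Rightarrow> nat set \<Rightarrow> bool" where
  "is_leaf \<Delta> F \<longleftrightarrow> F \<in> facets \<Delta> \<and>
     (facets \<Delta> = {F} \<or>
      (\<exists>G\<in>facets \<Delta>. G \<noteq> F \<and> (\<forall>H\<in>facets \<Delta>. H \<noteq> F \<longrightarrow> H \<inter> F \<subseteq> G \<inter> F)))"

text \<open>Leaf order F_1..F_s (0-indexed list): for 1 < j <= s, F_j is a leaf of <F_1..F_j>.\<close>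
definition quasi_forest :: "nat set set \<Rightarrow> bool" where
  "quasi_forest \<Delta> \<longleftrightarrow> (\<exists>Fs. distinct Fs \<and> set Fs = facets \<Delta> \<and>
     (\<forall>j. 0 < j \<and> j < length Fs \<longrightarrow> is_leaf (gen (set (take (Suc j) Fs))) (Fs ! j)))"

definition forest :: "nat set set \<Rightarrow> bool" where
  "forest \<Delta> \<longleftrightarrow> (\<forall>S. S \<subseteq> facets \<Delta> \<longrightarrow> S \<noteq> {} \<longrightarrow> (\<exists>F. is_leaf (gen S) F))"

text \<open>f_{i-1} with the convention f_{-1} = 1.\<close>
definition fshift :: "(nat \<Rightarrow> int) \<Rightarrow> nat \<Rightarrow> int" where
  "fshift f i = (if i = 0 then 1 else f (i - 1))"

end

theory Submission
  imports Defs
begin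

(*
  Encode a complex by Q(Delta) = sum over faces A of (x - 1)^|A| = sum_i f_(i-1) (x - 1)^i, the
  polynomial of (iii); since the powers (x - 1)^j form a basis, Q determines the f-vector.  The
  full simplex on F has Q = x^|F|, so by inclusion-exclusion attaching a leaf F along its branch G
  adds x^|F| - x^|G inter F|.  Along a leaf order the tail sums c_k + ... + c_d therefore never drop,
  and each one is already positive once a facet with at least k vertices is present: this gives
  (i) => (iii).  Writing Q = 1 + (x - 1) (sum_i b_i x^(i-1)), the tail sums telescope to b_k, which
  is (iii) <=> (iv).  Conversely, given b_i > 0, glue to the (d-1)-simplex on {1..d}, for each i,
  b_i - 1 further facets, each made of a new vertex and the face {1..i-1}; all facets meet inside
  the nested faces {1..i-1}, so this is a forest, and its Q is the polynomial of (iii), giving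
  (iv) => (ii).  A forest is a quasi-forest because leaves can be pruned one at a time.
*)

lemma sum_Pow_power_card:
  fixes y :: "'a::comm_semiring_1"
  assumes "finite F"
  shows "(\<Sum>A\<in>Pow F. y ^ card A) = (y + 1) ^ card F"
  using prod_add[OF assms, of "\<lambda>_. y" "\<lambda>_. 1"] assms
  by (simp add: add.commute)

lemma pcompose_shift_power: "([:-1, 1:] :: 'a::comm_ring_1 poly) ^ j \<circ>\<^sub>p [:1, 1:] = monom 1 j"
proof (induction j)
  case (Suc j)
  have "[:-1, 1:] \<circ>\<^sub>p [:1, 1:] = ([:0, 1:] :: 'a poly)"
    by (simp add: pcompose_pCons one_pCons)
  then show ?case
    by (simp only: power_Suc pcompose_mult Suc.IH) (simp add: monom_altdef)
qed (simp add: pcompose_1)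

lemma coeff_shifted_power_sum:
  fixes a :: "nat \<Rightarrow> 'a::comm_ring_1"
  shows "coeff ((\<Sum>j=0..d. smult (a j) ([:-1, 1:] ^ j)) \<circ>\<^sub>p [:1, 1:]) i = (if i \<le> d then a i else 0)"
  by (simp add: pcompose_sum pcompose_smult pcompose_shift_power coeff_sum if_distrib cong: if_cong)

lemma shifted_power_sum_unique:
  fixes a b :: "nat \<Rightarrow> 'a::comm_ring_1"
  assumes "(\<Sum>j=0..d. smult (a j) ([:-1, 1:] ^ j)) = (\<Sum>j=0..d. smult (b j) ([:-1, 1:] ^ j))"
    and "j \<le> d"
  shows "a j = b j"
  using arg_cong[OF assms(1), of "\<lambda>p. coeff (p \<circ>\<^sub>p [:1, 1:]) j"] assms(2)
  by (simp add: coeff_shifted_power_sum)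

lemma shifted_power_sum_fshift:
  "(\<Sum>j=0..d. smult (fshift f j) ([:-1, 1:] ^ j))
     = 1 + [:-1, 1:] * (\<Sum>j=1..d. smult (f (j - 1)) ([:-1, 1:] ^ (j - 1)))"
proof -
  have "(\<Sum>j=1..d. smult (fshift f j) ([:-1, 1:] ^ j))
      = (\<Sum>j=1..d. [:-1, 1:] * smult (f (j - 1)) ([:-1, 1:] ^ (j - 1)))"
  proof (rule sum.cong)
    fix j :: nat assume "j \<in> {1..d}"
    then obtain m where j: "j = Suc m" by (cases j) auto
    then have "fshift f j = f m" by (simp add: fshift_def)
    then show "smult (fshift f j) ([:-1, 1:] ^ j) = [:-1, 1:] * smult (f (j - 1)) ([:-1, 1:] ^ (j - 1))"
      by (simp only: j diff_Suc_1 power_Suc mult_smult_right)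
  qed simp
  then show ?thesis
    by (simp add: sum.atLeast_Suc_atMost sum_distrib_left fshift_def)
qed

lemma tail_sum_coeff_one_plus_linear_times:
  fixes q :: "'a::comm_ring_1 poly"
  assumes "degree q < d" and "1 \<le> k" and "k \<le> d"
  shows "(\<Sum>i=k..d. coeff (1 + [:-1, 1:] * q) i) = coeff q (k - 1)"
proof -
  have "(\<Sum>i=k..d. coeff (1 + [:-1, 1:] * q) i) = (\<Sum>i=k..d. coeff q (i - 1) - coeff q i)"
  proof (rule sum.cong)
    fix i assume "i \<in> {k..d}"
    then obtain m where "i = Suc m" using assms(2) by (cases i) auto
    then show "coeff (1 + [:-1, 1:] * q) i = coeff q (i - 1) - coeff q i"
      by simp
  qed simp
  also have "\<dots> = coeff q (k - 1) - coeff q d"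
  proof -
    have "(\<Sum>i=k..d. coeff q i - coeff q (i - 1)) = coeff q d - coeff q (k - 1)"
      using sum_Suc_diff[of k d "\<lambda>i. coeff q (i - 1)"] assms(3) by simp
    then show ?thesis by (simp add: sum_subtractf) (metis minus_diff_eq)
  qed
  also have "coeff q d = 0" using assms(1) by (simp add: coeff_eq_0)
  finally show ?thesis by simp
qed

lemma degree_shifted_power_sum_less:
  assumes "1 \<le> d"
  shows "degree (\<Sum>j=1..d. smult (a j) ([:-1, 1:] ^ (j - 1)) :: 'a::comm_ring_1 poly) < d"
proof -
  have "degree (\<Sum>j=1..d. smult (a j) ([:-1, 1:] ^ (j - 1)) :: 'a poly) \<le> d - 1"
    by (intro degree_sum_le order.trans[OF degree_smult_le] order.trans[OF degree_power_le])
      auto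
  then show ?thesis using assms by linarith
qed

lemma linear_times_eq_sum_monom_diff:
  fixes q :: "'a::comm_ring_1 poly"
  assumes "degree q < d"
  shows "[:-1, 1:] * q = (\<Sum>i<d. smult (coeff q i) (monom 1 (Suc i) - monom 1 i))"
proof -
  have "q = (\<Sum>i<d. monom (coeff q i) i)"
    by (rule poly_eqI) (use assms in \<open>auto simp: coeff_sum coeff_eq_0\<close>)
  also have "[:-1, 1:] * \<dots> = (\<Sum>i<d. smult (coeff q i) (monom 1 (Suc i) - monom 1 i))"
    unfolding sum_distrib_left
    by (rule sum.cong) (simp_all add: smult_monom monom_Suc smult_diff_right minus_monom)
  finally show ?thesis .
qed

lemma tail_sums_pos_iff_coeffs_pos:
  fixes f :: "nat \<Rightarrow> int"
  assumes "1 \<le> d"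
  shows "(\<forall>k\<in>{1..d}. (\<Sum>i=k..d. coeff (\<Sum>j=0..d. smult (fshift f j) ([:-1, 1:] ^ j)) i) > 0)
     \<longleftrightarrow> (\<forall>i\<in>{1..d}. coeff (\<Sum>j=1..d. smult (f (j - 1)) ([:-1, 1:] ^ (j - 1))) (i - 1) > 0)"
proof -
  have tail: "(\<Sum>i=k..d. coeff (\<Sum>j=0..d. smult (fshift f j) ([:-1, 1:] ^ j)) i)
      = coeff (\<Sum>j=1..d. smult (f (j - 1)) ([:-1, 1:] ^ (j - 1))) (k - 1)" if "k \<in> {1..d}" for k
    unfolding shifted_power_sum_fshift using that
    by (intro tail_sum_coeff_one_plus_linear_times degree_shifted_power_sum_less assms) auto
  show ?thesis by (rule ball_cong[OF refl]) (simp only: tail)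
qed

definition face_poly :: "nat set set \<Rightarrow> int poly" where
  "face_poly \<Delta> = (\<Sum>A\<in>\<Delta>. [:-1, 1:] ^ card A)"

lemma face_poly_Pow: "finite F \<Longrightarrow> face_poly (Pow F) = monom 1 (card F)"
  unfolding face_poly_def by (simp add: sum_Pow_power_card one_pCons monom_altdef)

lemma face_poly_by_card:
  assumes "finite \<Delta>" and "\<forall>A\<in>\<Delta>. card A \<le> d"
  shows "face_poly \<Delta> = (\<Sum>j=0..d. smult (int (card {A\<in>\<Delta>. card A = j})) ([:-1, 1:] ^ j))"
proof -
  have "face_poly \<Delta> = (\<Sum>j=0..d. \<Sum>A\<in>{A\<in>\<Delta>. card A = j}. [:-1, 1:] ^ card A)"
    unfolding face_poly_def by (rule sum.group[symmetric]) (use assms in auto)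
  then show ?thesis by (simp add: of_nat_poly)
qed

lemma gen_insert: "gen (insert F S) = gen S \<union> Pow F"
  unfolding gen_def by auto

lemma gen_eq_Union_Pow: "gen S = (\<Union>F\<in>S. Pow F)"
  unfolding gen_def by auto

lemma finite_gen: "finite S \<Longrightarrow> \<forall>F\<in>S. finite F \<Longrightarrow> finite (gen S)"
  unfolding gen_eq_Union_Pow by auto

lemma face_poly_gen_insert:
  assumes "finite S" and "\<forall>H\<in>S. finite H" and "finite F"
    and "G \<in> S" and "\<forall>H\<in>S. H \<inter> F \<subseteq> G \<inter> F"
  shows "face_poly (gen (insert F S)) = face_poly (gen S) + monom 1 (card F) - monom 1 (card (G \<inter> F))"
proof -
  have overlap: "gen S \<inter> Pow F = Pow (G \<inter> F)"
    using assms(4,5) unfolding gen_def by blast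
  have "face_poly (gen S \<union> Pow F) + face_poly (gen S \<inter> Pow F) = face_poly (gen S) + face_poly (Pow F)"
    unfolding face_poly_def by (rule sum.union_inter) (use finite_gen assms(1-3) in auto)
  then show ?thesis
    unfolding gen_insert overlap using assms(3) by (simp add: face_poly_Pow algebra_simps del: Pow_Int_eq)
qed

lemma tail_sum_coeff_monom:
  "(\<Sum>i=k..d. coeff (monom 1 a :: 'a::comm_semiring_1 poly) i) = of_bool (k \<le> a \<and> a \<le> d)"
  by simp

lemma tail_sum_face_poly_gen_insert:
  assumes "finite S" and "\<forall>H\<in>S. finite H \<and> card H \<le> d" and "finite F" and "card F \<le> d"
    and "G \<in> S" and "\<forall>H\<in>S. H \<inter> F \<subseteq> G \<inter> F"
  shows "(\<Sum>i=k..d. coeff (face_poly (gen (insert F S))) i)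
    = (\<Sum>i=k..d. coeff (face_poly (gen S)) i) + of_bool (k \<le> card F) - of_bool (k \<le> card (G \<inter> F))"
proof -
  have "card (G \<inter> F) \<le> card G" using assms(2,5) by (simp add: card_mono)
  then have "card (G \<inter> F) \<le> d" using assms(2,5) by force
  moreover have "face_poly (gen (insert F S))
      = face_poly (gen S) + monom 1 (card F) - monom 1 (card (G \<inter> F))"
    using assms by (intro face_poly_gen_insert) auto
  ultimately show ?thesis
    using assms(4) by (simp add: sum.distrib sum_subtractf tail_sum_coeff_monom del: coeff_monom)
qed

lemma finite_simplicial_complex: "simplicial_complex n \<Delta> \<Longrightarrow> finite \<Delta>"
  unfolding simplicial_complex_def by (rule finite_subset[of _ "Pow {1..n}"]) auto

lemma finite_face: "simplicial_complex n \<Delta> \<Longrightarrow> A \<in> \<Delta> \<Longrightarrow> finite A"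
  unfolding simplicial_complex_def by (meson finite_atLeastAtMost finite_subset)

lemma empty_face: "simplicial_complex n \<Delta> \<Longrightarrow> \<Delta> \<noteq> {} \<Longrightarrow> {} \<in> \<Delta>"
  unfolding simplicial_complex_def by blast

lemma face_poly_eq_iff_fnum:
  fixes f :: "nat \<Rightarrow> int"
  assumes "simplicial_complex n \<Delta>" and "\<Delta> \<noteq> {}" and "\<forall>A\<in>\<Delta>. card A \<le> d"
  shows "face_poly \<Delta> = (\<Sum>j=0..d. smult (fshift f j) ([:-1, 1:] ^ j)) \<longleftrightarrow> (\<forall>i<d. int (fnum \<Delta> i) = f i)"
proof -
  have "{A\<in>\<Delta>. card A = 0} = {{}}"
    using empty_face[OF assms(1,2)] finite_face[OF assms(1)] by auto
  then have counts: "int (card {A\<in>\<Delta>. card A = j}) = fshift (\<lambda>i. int (fnum \<Delta> i)) j" for j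
    by (cases j) (simp_all add: fshift_def fnum_def)
  define g where "g i = int (fnum \<Delta> i)" for i
  have "face_poly \<Delta> = (\<Sum>j=0..d. smult (fshift g j) ([:-1, 1:] ^ j))"
    unfolding g_def counts[symmetric]
    by (rule face_poly_by_card[OF finite_simplicial_complex[OF assms(1)] assms(3)])
  then have "face_poly \<Delta> = (\<Sum>j=0..d. smult (fshift f j) ([:-1, 1:] ^ j))
      \<longleftrightarrow> (\<forall>j\<le>d. fshift g j = fshift f j)"
    using shifted_power_sum_unique[of "fshift g" d "fshift f"] by (auto intro: sum.cong)
  also have "\<dots> \<longleftrightarrow> (\<forall>i<d. g i = f i)"
    by (auto simp: fshift_def) (metis Suc_leI diff_Suc_Suc diff_zero zero_less_Suc)
  finally show ?thesis unfolding g_def .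
qed

lemma facets_gen_subset: "facets (gen S) \<subseteq> S"
  unfolding facets_def gen_def by blast

lemma facets_gen:
  assumes "\<forall>A\<in>S. \<forall>B\<in>S. A \<subseteq> B \<longrightarrow> A = B"
  shows "facets (gen S) = S"
proof
  show "S \<subseteq> facets (gen S)"
    using assms unfolding facets_def gen_def by fastforce
qed (rule facets_gen_subset)

lemma facets_antichain: "\<forall>A\<in>facets \<Delta>. \<forall>B\<in>facets \<Delta>. A \<subseteq> B \<longrightarrow> A = B"
  unfolding facets_def by blast

lemma ex_facet_superset:
  assumes "finite \<Delta>" and "A \<in> \<Delta>"
  shows "\<exists>F\<in>facets \<Delta>. A \<subseteq> F"
proof -
  obtain F where "F \<in> \<Delta>" "A \<subseteq> F" "\<forall>B\<in>\<Delta>. F \<subseteq> B \<longrightarrow> F = B"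
    using finite_has_maximal2[OF assms] by blast
  then show ?thesis unfolding facets_def by auto
qed

lemma gen_facets:
  assumes "simplicial_complex n \<Delta>"
  shows "gen (facets \<Delta>) = \<Delta>"
proof
  show "gen (facets \<Delta>) \<subseteq> \<Delta>"
    using assms unfolding gen_def facets_def simplicial_complex_def by blast
  show "\<Delta> \<subseteq> gen (facets \<Delta>)"
    using ex_facet_superset[OF finite_simplicial_complex[OF assms]] unfolding gen_def by blast
qed

definition leaf_order :: "nat set list \<Rightarrow> bool" where
  "leaf_order Fs \<longleftrightarrow> (\<forall>j. 0 < j \<and> j < length Fs \<longrightarrow> is_leaf (gen (set (take (Suc j) Fs))) (Fs ! j))"

lemma quasi_forest_iff_leaf_order:
  "quasi_forest \<Delta> \<longleftrightarrow> (\<exists>Fs. distinct Fs \<and> set Fs = facets \<Delta> \<and> leaf_order Fs)"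
  unfolding quasi_forest_def leaf_order_def ..

lemma leaf_order_snoc:
  "leaf_order (Fs @ [F]) \<longleftrightarrow> leaf_order Fs \<and> (Fs \<noteq> [] \<longrightarrow> is_leaf (gen (insert F (set Fs))) F)"
proof -
  have "j < length Fs \<Longrightarrow> take (Suc j) (Fs @ [F]) = take (Suc j) Fs \<and> (Fs @ [F]) ! j = Fs ! j" for j
    by (simp add: nth_append)
  moreover have "take (Suc (length Fs)) (Fs @ [F]) = Fs @ [F]"
    by simp
  ultimately show ?thesis
    unfolding leaf_order_def by (auto simp: less_Suc_eq)
qed

lemma ex_leaf_order:
  assumes "finite S" and "\<forall>S'. S' \<subseteq> S \<longrightarrow> S' \<noteq> {} \<longrightarrow> (\<exists>F. is_leaf (gen S') F)"
  shows "\<exists>Fs. distinct Fs \<and> set Fs = S \<and> leaf_order Fs"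
  using assms
proof (induction S rule: finite_psubset_induct)
  case (psubset S)
  show ?case
  proof (cases "S = {}")
    case True
    then show ?thesis by (auto simp: leaf_order_def)
  next
    case False
    then obtain F where leaf: "is_leaf (gen S) F" using psubset.prems by blast
    then have "F \<in> S" using facets_gen_subset unfolding is_leaf_def by blast
    then obtain Fs where Fs: "distinct Fs" "set Fs = S - {F}" "leaf_order Fs"
      using psubset.IH[of "S - {F}"] psubset.prems by blast
    have "insert F (set Fs) = S" using Fs(2) \<open>F \<in> S\<close> by blast
    then have "distinct (Fs @ [F]) \<and> set (Fs @ [F]) = S \<and> leaf_order (Fs @ [F])"
      using Fs leaf by (auto simp: leaf_order_snoc)
    then show ?thesis by blast
  qed
qed

lemma forest_imp_quasi_forest:
  assumes "simplicial_complex n \<Delta>" and "forest \<Delta>"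
  shows "quasi_forest \<Delta>"
proof -
  have "finite (facets \<Delta>)"
    using finite_simplicial_complex[OF assms(1)] unfolding facets_def by simp
  then show ?thesis
    using ex_leaf_order assms(2) unfolding forest_def quasi_forest_iff_leaf_order by blast
qed

lemma leaf_gen_insert_imp_branch:
  assumes "\<forall>A\<in>insert F S. \<forall>B\<in>insert F S. A \<subseteq> B \<longrightarrow> A = B"
    and "F \<notin> S" and "S \<noteq> {}" and "is_leaf (gen (insert F S)) F"
  shows "\<exists>G\<in>S. \<forall>H\<in>S. H \<inter> F \<subseteq> G \<inter> F"
proof -
  have "insert F S = {F} \<or> (\<exists>G\<in>insert F S. G \<noteq> F \<and> (\<forall>H\<in>insert F S. H \<noteq> F \<longrightarrow> H \<inter> F \<subseteq> G \<inter> F))"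
    using assms(4) unfolding is_leaf_def facets_gen[OF assms(1)] by (rule conjunct2)
  moreover have "insert F S \<noteq> {F}" using assms(2,3) by blast
  ultimately obtain G where G: "G \<in> S" "\<forall>H\<in>insert F S. H \<noteq> F \<longrightarrow> H \<inter> F \<subseteq> G \<inter> F"
    by blast
  show ?thesis
  proof (intro bexI[OF _ G(1)] ballI)
    fix H assume "H \<in> S"
    then show "H \<inter> F \<subseteq> G \<inter> F" using G(2) assms(2) by (metis insertCI)
  qed
qed

lemma tail_sum_face_poly_leaf_order:
  assumes "leaf_order Fs" and "distinct Fs"
    and "\<forall>A\<in>set Fs. \<forall>B\<in>set Fs. A \<subseteq> B \<longrightarrow> A = B"
    and "\<forall>F\<in>set Fs. finite F \<and> card F \<le> d"
  shows "of_bool (\<exists>F\<in>set Fs. k \<le> card F) \<le> (\<Sum>i=k..d. coeff (face_poly (gen (set Fs))) i)"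
  using assms
proof (induction Fs rule: rev_induct)
  case Nil
  then show ?case by (simp add: gen_def face_poly_def)
next
  case (snoc F Fs)
  let ?S = "set Fs"
  define tail where "tail \<Delta> = (\<Sum>i=k..d. coeff (face_poly \<Delta>) i)" for \<Delta>
  have F: "finite F" "card F \<le> d" "F \<notin> ?S" using snoc.prems(2,4) by auto
  have "leaf_order Fs" using snoc.prems(1) by (simp add: leaf_order_snoc)
  then have IH: "of_bool (\<exists>H\<in>?S. k \<le> card H) \<le> tail (gen ?S)"
    unfolding tail_def by (rule snoc.IH) (use snoc.prems(2-4) in auto)
  show ?case
  proof (cases "Fs = []")
    case True
    then have "gen (set (Fs @ [F])) = Pow F" by (simp add: gen_eq_Union_Pow)
    then show ?thesis using True F by (simp add: face_poly_Pow)
  next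
    case False
    have leaf: "is_leaf (gen (insert F ?S)) F" using snoc.prems(1) False by (simp add: leaf_order_snoc)
    have anti: "\<forall>A\<in>insert F ?S. \<forall>B\<in>insert F ?S. A \<subseteq> B \<longrightarrow> A = B" using snoc.prems(3) by simp
    obtain G where G: "G \<in> ?S" "\<forall>H\<in>?S. H \<inter> F \<subseteq> G \<inter> F"
      using leaf_gen_insert_imp_branch[OF anti F(3) _ leaf] False by auto
    have "F \<subseteq> G \<longrightarrow> F = G" using anti G(1) by simp
    then have "G \<inter> F \<subset> F" using G(1) F(3) by blast
    then have "card (G \<inter> F) < card F" using F(1) by (rule psubset_card_mono[rotated])
    have "card (G \<inter> F) \<le> card G" using G(1) snoc.prems(4) by (simp add: card_mono)
    have step: "tail (gen (insert F ?S))
        = tail (gen ?S) + of_bool (k \<le> card F) - of_bool (k \<le> card (G \<inter> F))"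
      unfolding tail_def using snoc.prems(4) F(1,2) G by (intro tail_sum_face_poly_gen_insert) auto
    have "of_bool (\<exists>H\<in>insert F ?S. k \<le> card H) \<le> tail (gen (insert F ?S))"
    proof (cases "k \<le> card (G \<inter> F)")
      case True
      then have "\<exists>H\<in>?S. k \<le> card H" using G(1) \<open>card (G \<inter> F) \<le> card G\<close> by (meson le_trans)
      then have "1 \<le> tail (gen ?S)" using IH by simp
      then show ?thesis using step True \<open>card (G \<inter> F) < card F\<close> by simp
    next
      case False
      then show ?thesis using step IH
        by (cases "\<exists>H\<in>?S. k \<le> card H"; cases "k \<le> card F") auto
    qed
    then show ?thesis by (simp add: tail_def)
  qed
qed

lemma quasi_forest_tail_sum_face_poly_pos:
  assumes "simplicial_complex n \<Delta>" and "quasi_forest \<Delta>" and "\<forall>A\<in>\<Delta>. card A \<le> d"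
    and "A \<in> \<Delta>" and "card A = d" and "k \<in> {1..d}"
  shows "0 < (\<Sum>i=k..d. coeff (face_poly \<Delta>) i)"
proof -
  obtain Fs where Fs: "distinct Fs" "set Fs = facets \<Delta>" "leaf_order Fs"
    using assms(2) unfolding quasi_forest_iff_leaf_order by blast
  have "facets \<Delta> \<subseteq> \<Delta>" unfolding facets_def by blast
  then have facets: "\<forall>F\<in>set Fs. finite F \<and> card F \<le> d"
    using Fs(2) assms(3) finite_face[OF assms(1)] by auto
  obtain F where F: "F \<in> facets \<Delta>" "A \<subseteq> F"
    using ex_facet_superset[OF finite_simplicial_complex[OF assms(1)] assms(4)] by blast
  then have "card A \<le> card F" using facets Fs(2) by (simp add: card_mono)
  then have "k \<le> card F" using assms(5,6) by simp
  then have "\<exists>F\<in>set Fs. k \<le> card F" using F(1) Fs(2) by blast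
  moreover have "\<forall>A\<in>set Fs. \<forall>B\<in>set Fs. A \<subseteq> B \<longrightarrow> A = B"
    using Fs(2) facets_antichain by blast
  ultimately have "1 \<le> (\<Sum>i=k..d. coeff (face_poly (gen (set Fs))) i)"
    using tail_sum_face_poly_leaf_order[OF Fs(3,1) _ facets, of k] by simp
  then show ?thesis unfolding Fs(2) gen_facets[OF assms(1)] by simp
qed

lemma quasi_forest_imp_tail_sums_pos:
  fixes f :: "nat \<Rightarrow> int"
  assumes "simplicial_complex n \<Delta>" and "quasi_forest \<Delta>" and "face_size \<Delta> = d"
    and "1 \<le> d" and "0 < f 0" and "\<forall>i<d. int (fnum \<Delta> i) = f i" and "k \<in> {1..d}"
  shows "0 < (\<Sum>i=k..d. coeff (\<Sum>j=0..d. smult (fshift f j) ([:-1, 1:] ^ j)) i)"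
proof -
  have "fnum \<Delta> 0 \<noteq> 0" using assms(4-6) by auto
  then have "\<Delta> \<noteq> {}" unfolding fnum_def by auto
  moreover have "finite \<Delta>" using finite_simplicial_complex[OF assms(1)] .
  ultimately have "d \<in> card ` \<Delta>" and bound: "\<forall>A\<in>\<Delta>. card A \<le> d"
    using assms(3) Max_in[of "card ` \<Delta>"] Max_ge[of "card ` \<Delta>"] unfolding face_size_def by auto
  then obtain A where "A \<in> \<Delta>" "card A = d" by auto
  moreover have "face_poly \<Delta> = (\<Sum>j=0..d. smult (fshift f j) ([:-1, 1:] ^ j))"
    using face_poly_eq_iff_fnum[OF assms(1) \<open>\<Delta> \<noteq> {}\<close> bound] assms(6) by blast
  ultimately show ?thesis
    using quasi_forest_tail_sum_face_poly_pos[OF assms(1,2) bound _ _ assms(7)] by simp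
qed

lemma simplicial_complex_gen:
  assumes "\<forall>F\<in>S. F \<subseteq> {1..n}" and "\<forall>i\<in>{1..n}. \<exists>F\<in>S. i \<in> F"
  shows "simplicial_complex n (gen S)"
  unfolding simplicial_complex_def
proof (intro conjI ballI allI impI)
  fix i assume "i \<in> {1..n}"
  then obtain F where "F \<in> S" "{i} \<subseteq> F" using bspec[OF assms(2)] by blast
  then show "{i} \<in> gen S" unfolding gen_def by auto
next
  fix F assume "F \<in> gen S"
  then show "F \<subseteq> {1..n}" using assms(1) unfolding gen_def by auto
next
  fix F G assume "F \<in> gen S" and "G \<subseteq> F"
  then show "G \<in> gen S" unfolding gen_def by auto
qed

lemma card_le_if_mem_gen:
  assumes "A \<in> gen S" and "\<forall>F\<in>S. finite F \<and> card F \<le> d"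
  shows "card A \<le> d"
proof -
  obtain F where "F \<in> S" "A \<subseteq> F" using assms(1) unfolding gen_def by blast
  then show ?thesis using assms(2) card_mono[of F A] by auto
qed

lemma face_size_gen:
  assumes "finite S" and "\<forall>F\<in>S. finite F \<and> card F \<le> d" and "F \<in> S" and "card F = d"
  shows "face_size (gen S) = d"
  unfolding face_size_def
proof (rule Max_eqI)
  show "finite (card ` gen S)" using finite_gen assms(1,2) by blast
  show "y \<le> d" if "y \<in> card ` gen S" for y
    using that card_le_if_mem_gen[OF _ assms(2)] by blast
  have "F \<in> gen S" using assms(3) unfolding gen_def by auto
  then show "d \<in> card ` gen S" using assms(4) by auto
qed

lemma forest_gen_if_traces_chain:
  assumes "finite B"
    and antichain: "\<forall>A\<in>S. \<forall>A'\<in>S. A \<subseteq> A' \<longrightarrow> A = A'"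
    and meet: "\<forall>H\<in>S. \<forall>F\<in>S. H \<noteq> F \<longrightarrow> H \<inter> F \<subseteq> B"
    and chain: "\<forall>H\<in>S. \<forall>F\<in>S. H \<inter> B \<subseteq> F \<inter> B \<or> F \<inter> B \<subseteq> H \<inter> B"
  shows "forest (gen S)"
  unfolding forest_def facets_gen[OF antichain]
proof (intro allI impI)
  \<comment> \<open>A facet with the smallest trace on \<open>B\<close> is a leaf, and any other facet is a branch of it.\<close>
  fix S' assume S': "S' \<subseteq> S" "S' \<noteq> {}"
  then have "\<forall>A\<in>S'. \<forall>A'\<in>S'. A \<subseteq> A' \<longrightarrow> A = A'" using antichain by auto
  then have facets': "facets (gen S') = S'" by (rule facets_gen)
  obtain F0 where "F0 \<in> S'" using S'(2) by blast
  then obtain F where F: "F \<in> S'" "\<forall>H\<in>S'. card (F \<inter> B) \<le> card (H \<inter> B)"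
    using ex_has_least_nat[of "\<lambda>H. H \<in> S'" F0 "\<lambda>H. card (H \<inter> B)"] by auto
  have trace: "H \<inter> F = F \<inter> B" if H: "H \<in> S'" "H \<noteq> F" for H
  proof -
    have le: "card (F \<inter> B) \<le> card (H \<inter> B)" using F(2) H(1) by blast
    consider "F \<inter> B \<subseteq> H \<inter> B" | "H \<inter> B \<subseteq> F \<inter> B" using chain F(1) H(1) S'(1) by (meson subsetD)
    then have "F \<inter> B \<subseteq> H \<inter> B"
    proof cases
      case 1
      then show ?thesis .
    next
      case 2
      moreover have "card (H \<inter> B) \<le> card (F \<inter> B)" using 2 \<open>finite B\<close> by (simp add: card_mono)
      ultimately have "H \<inter> B = F \<inter> B" using le \<open>finite B\<close> by (simp add: card_subset_eq)
      then show ?thesis by simp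
    qed
    moreover have "H \<inter> F \<subseteq> B" using meet F(1) H S'(1) by (meson subsetD)
    ultimately show ?thesis by blast
  qed
  show "\<exists>F. is_leaf (gen S') F"
  proof (cases "S' = {F}")
    case True
    then have "is_leaf (gen S') F" unfolding is_leaf_def facets' by simp
    then show ?thesis ..
  next
    case False
    then obtain G where "G \<in> S'" "G \<noteq> F" using F(1) by blast
    then have "\<forall>H\<in>S'. H \<noteq> F \<longrightarrow> H \<inter> F \<subseteq> G \<inter> F" using trace by simp
    then have "is_leaf (gen S') F" unfolding is_leaf_def facets' using F(1) \<open>G \<in> S'\<close> \<open>G \<noteq> F\<close> by auto
    then show ?thesis ..
  qed
qed

definition pendant_facets :: "nat \<Rightarrow> nat list \<Rightarrow> nat set set" where
  "pendant_facets d ks = insert {1..d} ((\<lambda>i. insert (d + 1 + i) {1..<ks ! i}) ` {..<length ks})"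

lemma pendant_facets_cases:
  assumes "H \<in> pendant_facets d ks" and "\<forall>k\<in>set ks. 1 \<le> k \<and> k \<le> d"
  obtains "H = {1..d}"
    | i where "i < length ks" "1 \<le> ks ! i" "ks ! i \<le> d" "H = insert (d + 1 + i) {1..<ks ! i}"
  using assms unfolding pendant_facets_def by (auto simp: nth_mem)

lemma pendant_facets_snoc:
  "pendant_facets d (ks @ [k]) = insert (insert (d + 1 + length ks) {1..<k}) (pendant_facets d ks)"
proof -
  have "(\<lambda>i. insert (d + 1 + i) {1..<(ks @ [k]) ! i}) ` {..<length ks}
      = (\<lambda>i. insert (d + 1 + i) {1..<ks ! i}) ` {..<length ks}"
    by (rule image_cong) (simp_all add: nth_append)
  then show ?thesis unfolding pendant_facets_def by (auto simp: lessThan_Suc)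
qed

lemma face_poly_pendant_facets:
  assumes "\<forall>k\<in>set ks. 1 \<le> k \<and> k \<le> d"
  shows "face_poly (gen (pendant_facets d ks)) = monom 1 d + (\<Sum>k\<leftarrow>ks. monom 1 k - monom 1 (k - 1))"
  using assms
proof (induction ks rule: rev_induct)
  case Nil
  have "gen {{1..d}} = Pow {1..d}" by (simp add: gen_eq_Union_Pow)
  then show ?case by (simp add: pendant_facets_def face_poly_Pow)
next
  case (snoc k ks)
  let ?F = "insert (d + 1 + length ks) {1..<k}"
  have k: "1 \<le> k" "k \<le> d" and ks: "\<forall>k\<in>set ks. 1 \<le> k \<and> k \<le> d" using snoc.prems by auto
  have branch: "H \<inter> ?F \<subseteq> {1..d} \<inter> ?F" if "H \<in> pendant_facets d ks" for H
    using that ks by (cases rule: pendant_facets_cases) (use k in auto)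
  have "face_poly (gen (insert ?F (pendant_facets d ks)))
      = face_poly (gen (pendant_facets d ks)) + monom 1 (card ?F) - monom 1 (card ({1..d} \<inter> ?F))"
    by (rule face_poly_gen_insert) (use branch in \<open>auto simp: pendant_facets_def\<close>)
  moreover have "card ?F = k" using k by simp
  moreover have "{1..d} \<inter> ?F = {1..<k}" using k by auto
  then have "card ({1..d} \<inter> ?F) = k - 1" by simp
  ultimately show ?case using snoc.IH ks by (simp add: pendant_facets_snoc)
qed

lemma pendant_facets_antichain:
  assumes "\<forall>k\<in>set ks. 1 \<le> k \<and> k \<le> d" and "1 \<le> d"
  shows "\<forall>H\<in>pendant_facets d ks. \<forall>H'\<in>pendant_facets d ks. H \<subseteq> H' \<longrightarrow> H = H'"
proof (intro ballI impI)
  fix H H' assume H: "H \<in> pendant_facets d ks" and H': "H' \<in> pendant_facets d ks" and "H \<subseteq> H'"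
  from H' assms(1) show "H = H'"
  proof (cases rule: pendant_facets_cases)
    case 1
    from H assms(1) show ?thesis
      by (cases rule: pendant_facets_cases) (use 1 \<open>H \<subseteq> H'\<close> in auto)
  next
    case (2 j)
    note H'_eq = 2
    from H assms(1) show ?thesis
    proof (cases rule: pendant_facets_cases)
      case 1
      then have "d \<in> H'" using \<open>H \<subseteq> H'\<close> assms(2) by auto
      then show ?thesis using H'_eq by auto
    next
      case (2 i)
      then have "d + 1 + i \<in> H'" using \<open>H \<subseteq> H'\<close> by auto
      then have "i = j" using H'_eq by auto
      then show ?thesis using 2 H'_eq by simp
    qed
  qed
qed

lemma pendant_facets_meet:
  assumes "\<forall>k\<in>set ks. 1 \<le> k \<and> k \<le> d"
  shows "\<forall>H\<in>pendant_facets d ks. \<forall>F\<in>pendant_facets d ks. H \<noteq> F \<longrightarrow> H \<inter> F \<subseteq> {1..d}"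
proof (intro ballI impI)
  fix H F assume H: "H \<in> pendant_facets d ks" and F: "F \<in> pendant_facets d ks" and "H \<noteq> F"
  from H assms show "H \<inter> F \<subseteq> {1..d}"
  proof (cases rule: pendant_facets_cases)
    case (2 i)
    note H_eq = 2
    from F assms show ?thesis
    proof (cases rule: pendant_facets_cases)
      case (2 j)
      then show ?thesis using H_eq \<open>H \<noteq> F\<close> by auto
    qed auto
  qed auto
qed

lemma pendant_facets_traces_chain:
  assumes "\<forall>k\<in>set ks. 1 \<le> k \<and> k \<le> d"
  shows "\<forall>H\<in>pendant_facets d ks. \<forall>F\<in>pendant_facets d ks.
    H \<inter> {1..d} \<subseteq> F \<inter> {1..d} \<or> F \<inter> {1..d} \<subseteq> H \<inter> {1..d}"
proof (intro ballI)
  have initial_segment: "\<exists>c. H \<inter> {1..d} = {1..<c}" if "H \<in> pendant_facets d ks" for H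
    using that assms by (cases rule: pendant_facets_cases) (auto intro: exI[of _ "Suc d"])
  fix H F assume "H \<in> pendant_facets d ks" "F \<in> pendant_facets d ks"
  then obtain c c' where "H \<inter> {1..d} = {1..<c}" "F \<inter> {1..d} = {1..<c'}"
    using initial_segment by meson
  then show "H \<inter> {1..d} \<subseteq> F \<inter> {1..d} \<or> F \<inter> {1..d} \<subseteq> H \<inter> {1..d}"
    by (cases "c \<le> c'") auto
qed

lemma pendant_facets_complex:
  assumes "\<forall>k\<in>set ks. 1 \<le> k \<and> k \<le> d" and "1 \<le> d"
  shows "simplicial_complex (d + length ks) (gen (pendant_facets d ks))"
    and "forest (gen (pendant_facets d ks))"
    and "face_size (gen (pendant_facets d ks)) = d"
    and "\<forall>A\<in>gen (pendant_facets d ks). card A \<le> d"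
proof -
  have facets: "\<forall>H\<in>pendant_facets d ks. H \<subseteq> {1..d + length ks} \<and> finite H \<and> card H \<le> d"
  proof
    fix H assume "H \<in> pendant_facets d ks"
    then show "H \<subseteq> {1..d + length ks} \<and> finite H \<and> card H \<le> d"
      using assms(1) by (cases rule: pendant_facets_cases) auto
  qed
  have "\<exists>H\<in>pendant_facets d ks. i \<in> H" if "i \<in> {1..d + length ks}" for i
  proof (cases "i \<le> d")
    case True
    then show ?thesis using that unfolding pendant_facets_def by auto
  next
    case False
    then have "i - d - 1 < length ks" "i = d + 1 + (i - d - 1)" using that by auto
    then show ?thesis unfolding pendant_facets_def by blast
  qed
  then show "simplicial_complex (d + length ks) (gen (pendant_facets d ks))"
    using facets by (intro simplicial_complex_gen) auto
  have finite: "finite (pendant_facets d ks)" unfolding pendant_facets_def by simp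
  have "{1..d} \<in> pendant_facets d ks" unfolding pendant_facets_def by simp
  then show "face_size (gen (pendant_facets d ks)) = d"
    using finite facets by (intro face_size_gen) auto
  show "\<forall>A\<in>gen (pendant_facets d ks). card A \<le> d"
    using facets card_le_if_mem_gen by blast
  show "forest (gen (pendant_facets d ks))"
    by (rule forest_gen_if_traces_chain[OF finite_atLeastAtMost pendant_facets_antichain[OF assms]
          pendant_facets_meet[OF assms(1)] pendant_facets_traces_chain[OF assms(1)]])
qed

lemma sum_list_map_concat: "sum_list (map g (concat xss)) = (\<Sum>xs\<leftarrow>xss. sum_list (map g xs))"
  by (induction xss) auto

definition pendant_sizes :: "nat \<Rightarrow> int poly \<Rightarrow> nat list" where
  "pendant_sizes d q = concat (map (\<lambda>i. replicate (nat (coeff q i - 1)) (Suc i)) [0..<d])"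

lemma pendant_sizes_bounds: "\<forall>k\<in>set (pendant_sizes d q). 1 \<le> k \<and> k \<le> d"
  unfolding pendant_sizes_def by auto

lemma face_poly_pendant_sizes:
  assumes "degree q < d" and "\<forall>i<d. 1 \<le> coeff q i"
  shows "face_poly (gen (pendant_facets d (pendant_sizes d q))) = 1 + [:-1, 1:] * q"
proof -
  define g :: "nat \<Rightarrow> int poly" where "g k = monom 1 k - monom 1 (k - 1)" for k
  have "(\<Sum>k\<leftarrow>pendant_sizes d q. g k) = (\<Sum>i<d. of_nat (nat (coeff q i - 1)) * g (Suc i))"
    unfolding pendant_sizes_def sum_list_map_concat
    by (simp add: interv_sum_list_conv_sum_set_nat atLeast0LessThan sum_list_replicate)
  also have "\<dots> = (\<Sum>i<d. smult (coeff q i - 1) (g (Suc i)))"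
  proof (rule sum.cong)
    fix i assume "i \<in> {..<d}"
    then have "1 \<le> coeff q i" using assms(2) by simp
    then show "of_nat (nat (coeff q i - 1)) * g (Suc i) = smult (coeff q i - 1) (g (Suc i))"
      by (simp add: of_nat_poly)
  qed simp
  also have "\<dots> = (\<Sum>i<d. smult (coeff q i) (g (Suc i))) - (\<Sum>i<d. g (Suc i))"
    by (simp add: smult_diff_left sum_subtractf)
  also have "(\<Sum>i<d. g (Suc i)) = monom 1 d - 1"
    unfolding g_def using sum_lessThan_telescope[of "monom 1" d] by (simp add: monom_0 one_pCons)
  also have "(\<Sum>i<d. smult (coeff q i) (g (Suc i))) = [:-1, 1:] * q"
    unfolding g_def diff_Suc_1 by (rule linear_times_eq_sum_monom_diff[symmetric, OF assms(1)])
  finally show ?thesis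
    unfolding face_poly_pendant_facets[OF pendant_sizes_bounds] g_def by simp
qed

lemma forest_with_fvector_if_coeffs_pos:
  fixes f :: "nat \<Rightarrow> int"
  assumes "1 \<le> d"
    and "\<forall>i\<in>{1..d}. coeff (\<Sum>j=1..d. smult (f (j - 1)) ([:-1, 1:] ^ (j - 1))) (i - 1) > 0"
  shows "\<exists>n \<Delta>. simplicial_complex n \<Delta> \<and> forest \<Delta> \<and> face_size \<Delta> = d \<and> (\<forall>i<d. int (fnum \<Delta> i) = f i)"
proof -
  define q where "q = (\<Sum>j=1..d. smult (f (j - 1)) ([:-1, 1:] ^ (j - 1)))"
  define \<Delta> where "\<Delta> = gen (pendant_facets d (pendant_sizes d q))"
  note complex = pendant_facets_complex[OF pendant_sizes_bounds assms(1), of q, folded \<Delta>_def]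
  have "1 \<le> coeff q i" if "i < d" for i
  proof -
    have "Suc i \<in> {1..d}" using that by simp
    then have "0 < coeff q (Suc i - 1)" using assms(2) unfolding q_def by blast
    then show ?thesis by simp
  qed
  then have "face_poly \<Delta> = 1 + [:-1, 1:] * q"
    unfolding \<Delta>_def using degree_shifted_power_sum_less[OF assms(1)]
    by (intro face_poly_pendant_sizes) (auto simp: q_def)
  then have "face_poly \<Delta> = (\<Sum>j=0..d. smult (fshift f j) ([:-1, 1:] ^ j))"
    unfolding q_def shifted_power_sum_fshift .
  moreover have "\<Delta> \<noteq> {}" unfolding \<Delta>_def gen_def pendant_facets_def by auto
  ultimately have "\<forall>i<d. int (fnum \<Delta> i) = f i"
    using face_poly_eq_iff_fnum complex by blast
  then show ?thesis using complex by blast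
qed

theorem theorem1p1:
  fixes d :: nat and f :: "nat \<Rightarrow> int"
  assumes "d \<ge> 1"
    and "\<forall>i<d. f i > 0"
  shows
   "((\<exists>n \<Delta>. simplicial_complex n \<Delta> \<and> quasi_forest \<Delta> \<and> face_size \<Delta> = d \<and>
        (\<forall>i<d. int (fnum \<Delta> i) = f i))
     \<longleftrightarrow> (\<exists>n \<Delta>. simplicial_complex n \<Delta> \<and> forest \<Delta> \<and> face_size \<Delta> = d \<and>
        (\<forall>i<d. int (fnum \<Delta> i) = f i)))
    \<and> ((\<exists>n \<Delta>. simplicial_complex n \<Delta> \<and> forest \<Delta> \<and> face_size \<Delta> = d \<and>
        (\<forall>i<d. int (fnum \<Delta> i) = f i))
     \<longleftrightarrow> (\<forall>k\<in>{1..d}. (\<Sum>i=k..d. coeff (\<Sum>j=0..d. smult (fshift f j) ([:-1, 1:] ^ j)) i) > 0))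
    \<and> ((\<forall>k\<in>{1..d}. (\<Sum>i=k..d. coeff (\<Sum>j=0..d. smult (fshift f j) ([:-1, 1:] ^ j)) i) > 0)
     \<longleftrightarrow> (\<forall>i\<in>{1..d}. coeff (\<Sum>j=1..d. smult (f (j - 1)) ([:-1, 1:] ^ (j - 1))) (i - 1) > 0))"
  (is "(?i \<longleftrightarrow> ?ii) \<and> (?ii \<longleftrightarrow> ?iii) \<and> (?iii \<longleftrightarrow> ?iv)")
proof -
  have "?iii" if ?i
  proof -
    obtain n \<Delta> where \<Delta>: "simplicial_complex n \<Delta>" "quasi_forest \<Delta>" "face_size \<Delta> = d"
      "\<forall>i<d. int (fnum \<Delta> i) = f i"
      using \<open>?i\<close> by blast
    have "0 < f 0" using assms by simp
    then show ?thesis using quasi_forest_imp_tail_sums_pos[OF \<Delta>(1-3) assms(1) _ \<Delta>(4)] by blast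
  qed
  moreover have "?iii \<longleftrightarrow> ?iv"
    by (rule tail_sums_pos_iff_coeffs_pos[OF assms(1)])
  moreover have "?iv \<Longrightarrow> ?ii"
    by (rule forest_with_fvector_if_coeffs_pos[OF assms(1)])
  moreover have "?ii \<Longrightarrow> ?i"
    using forest_imp_quasi_forest by blast
  ultimately show ?thesis by blast
qed

end
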